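(* Let $r\ge2$ be an integer. Let $E$ be the set of $\psi\in C_p(\mathbb{R})$ for which there exist constants $m>0$ and $\alpha\ge0$ with $2mr>\alpha$ such that $m\,d(x)\le\psi(x)$ for all $x\in[0,1]$ and $\Delta_{n,k}(y;\psi)\le\alpha$ for all $n\in\mathbb{N}_0$, $k\in\{0,1,\dots,r^n-1\}$, $y\in(0,1)$. Then $E$ contains (1) the set $SC_0$ of all $\psi\in C_p(\mathbb{R})$ that are concave on $[0,1]$ and satisfy $\psi>0$ on $(0,1)$, and (2) the set $\mathcal{P}$.
   Context: $C_p(\mathbb{R})$ denotes the set of all continuous functions $f:\mathbb{R}\to\mathbb{R}$ periodic with period $1$ with $f(0)=0$; $\mathbb{N}_0=\mathbb{N}\cup\{0\}$. $d(x)=\min\{|x-z|:z\in\mathbb{Z}\}$. For $f\in C_p(\mathbb{R})$ and $(n,k,y)\in\mathbb{N}_0\times\mathbb{Z}\times(0,1)$: $\delta^+_{n,k}(y;f)=\dfrac{f(\frac{k+1}{r^n})-f(\frac{k+y}{r^n})}{\frac{1-y}{r^n}}$, $\delta^-_{n,k}(y;f)=\dfrac{f(\frac{k+y}{r^n})-f(\frac{k}{r^n})}{\frac{y}{r^n}}$, $\Delta_{n,k}(y;f)=2r^n(\delta^+_{n,k}(y;f)-\delta^-_{n,k}(y;f))$. For $c>0$, $\mathcal{P}_c$ is the set of $f\in C_p(\mathbb{R})$ with $\delta^+_{n,k}(y;f)-\delta^-_{n,k}(y;f)\le-c$ for all $(n,k,y)\in\mathbb{N}_0\times\mathbb{Z}\times(0,1)$,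 and $\mathcal{P}=\bigcup_{c>0}\mathcal{P}_c$. *)

theory Defs
  imports "HOL-Analysis.Analysis"
begin

definition Cp :: "(real \<Rightarrow> real) set" where
  "Cp = {f. continuous_on UNIV f \<and> (\<forall>x. f (x + 1) = f x) \<and> f 0 = 0}"

definition dZ :: "real \<Rightarrow> real" where
  "dZ x = Inf {\<bar>x - real_of_int z\<bar> | z. True}"

definition delta_plus :: "nat \<Rightarrow> nat \<Rightarrow> int \<Rightarrow> real \<Rightarrow> (real \<Rightarrow> real) \<Rightarrow> real" where
  "delta_plus r n k y f =
     (f ((real_of_int k + 1) / real r ^ n) - f ((real_of_int k + y) / real r ^ n)) / ((1 - y) / real r ^ n)"

definition delta_minus :: "nat \<Rightarrow> nat \<Rightarrow> int \<Rightarrow> real \<Rightarrow> (real \<Rightarrow> real) \<Rightarrow> real" where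
  "delta_minus r n k y f =
     (f ((real_of_int k + y) / real r ^ n) - f (real_of_int k / real r ^ n)) / (y / real r ^ n)"

definition Delta :: "nat \<Rightarrow> nat \<Rightarrow> int \<Rightarrow> real \<Rightarrow> (real \<Rightarrow> real) \<Rightarrow> real" where
  "Delta r n k y f = 2 * real r ^ n * (delta_plus r n k y f - delta_minus r n k y f)"

definition Pc :: "nat \<Rightarrow> real \<Rightarrow> (real \<Rightarrow> real) set" where
  "Pc r c = {f \<in> Cp. \<forall>n k y. 0 < y \<and> y < 1 \<longrightarrow>
       delta_plus r n k y f - delta_minus r n k y f \<le> - c}"

definition Pcal :: "nat \<Rightarrow> (real \<Rightarrow> real) set" where
  "Pcal r = (\<Union>c\<in>{0<..}. Pc r c)"

definition SC0 :: "(real \<Rightarrow> real) set" where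
  "SC0 = {f \<in> Cp. concave_on {0..1} f \<and> (\<forall>x\<in>{0<..<1}. f x > 0)}"

definition Eset :: "nat \<Rightarrow> (real \<Rightarrow> real) set" where
  "Eset r = {psi \<in> Cp. \<exists>m \<alpha>. m > 0 \<and> \<alpha> \<ge> 0 \<and> 2 * m * real r > \<alpha> \<and>
      (\<forall>x\<in>{0..1}. m * dZ x \<le> psi x) \<and>
      (\<forall>n k y. 0 \<le> k \<and> k < int r ^ n \<and> 0 < y \<and> y < 1 \<longrightarrow> Delta r n k y psi \<le> \<alpha>)}"

end

theory Submission
  imports Defs
begin

text \<open>In both cases \<open>\<alpha> = 0\<close> works: concavity, and the defining inequality of \<open>\<P>\<^sub>c\<close>,
  make every \<open>\<Delta>\<^sub>n\<^sub>k(y; \<psi>)\<close> nonpositive, so only the lower bound \<open>m d(x) \<le> \<psi>(x)\<close> needs work.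
  For a concave \<open>\<psi>\<close> vanishing at \<open>0\<close> and \<open>1\<close> the graph lies above the tent through
  \<open>(1/2, \<psi>(1/2))\<close>, giving \<open>m = 2\<psi>(1/2)\<close>; for \<open>\<psi> \<in> \<P>\<^sub>c\<close> the case \<open>n = k = 0\<close> of the
  defining inequality reads \<open>\<psi>(y) \<ge> c y (1 - y)\<close>, giving \<open>m = c/2\<close>.\<close>

lemma dZ_le_abs_diff: "dZ x \<le> \<bar>x - real_of_int z\<bar>"
  unfolding dZ_def by (rule cInf_lower) (auto intro: bdd_belowI[where m = 0])

lemma dZ_le_min: "dZ x \<le> min \<bar>x\<bar> \<bar>x - 1\<bar>"
  using dZ_le_abs_diff[of x 0] dZ_le_abs_diff[of x 1] by simp

lemma Cp_at_0_1:
  assumes "f \<in> Cp"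
  shows "f 0 = 0" "f 1 = 0"
  using assms unfolding Cp_def by (auto dest: spec[of _ 0])

lemma concave_on_chord_slopes:
  fixes f :: "real \<Rightarrow> real"
  assumes "concave_on I f" "a \<in> I" "b \<in> I" "a < t" "t < b"
  shows "(f b - f t) / (b - t) \<le> (f t - f a) / (t - a)"
proof -
  have "convex_on I (\<lambda>x. - f x)"
    using assms(1) by (simp add: concave_on_def)
  from convex_on_slope_le[OF this assms(2-5)]
  have "(f t - f a) / (a - t) \<le> (f b - f t) / (t - b)"
    by simp
  then show ?thesis
    by (simp add: minus_diff_eq[symmetric, of a t] minus_diff_eq[symmetric, of t b]
        del: minus_diff_eq)
qed

lemma concave_on_ge_tent:
  fixes f :: "real \<Rightarrow> real"
  assumes conc: "concave_on {0..1} f" and "f 0 \<ge> 0" "f 1 \<ge> 0" and x: "x \<in> {0..1}"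
  shows "2 * f (1/2) * min x (1 - x) \<le> f x"
proof (cases "x \<le> 1/2")
  case True
  have "(1 - 2*x) * f 0 + (2*x) * f (1/2) \<le> f ((1 - 2*x) *\<^sub>R 0 + (2*x) *\<^sub>R (1/2))"
    by (rule concave_onD[OF conc]) (use x True in auto)
  moreover have "0 \<le> (1 - 2*x) * f 0"
    using True \<open>f 0 \<ge> 0\<close> by simp
  ultimately show ?thesis
    using True by (simp add: algebra_simps)
next
  case False
  have "(2 - 2*x) * f (1/2) + (2*x - 1) * f 1 \<le> f ((2 - 2*x) *\<^sub>R (1/2) + (2*x - 1) *\<^sub>R 1)"
    using concave_onD[OF conc, of "2*x - 1" "1/2" 1] x False by (auto simp: algebra_simps)
  moreover have "0 \<le> (2*x - 1) * f 1"
    using False \<open>f 1 \<ge> 0\<close> by simp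
  ultimately show ?thesis
    using False x by (simp add: algebra_simps)
qed

lemma delta_plus_le_delta_minus_if_concave:
  assumes conc: "concave_on {0..1} f" and r: "r > 0"
    and k: "0 \<le> k" "k < int r ^ n" and y: "0 < y" "y < 1"
  shows "delta_plus r n k y f \<le> delta_minus r n k y f"
proof -
  define s where "s = real r ^ n"
  have s: "s > 0"
    using r by (simp add: s_def)
  have "k + 1 \<le> int r ^ n"
    using k by simp
  then have "real_of_int k + 1 \<le> s"
    unfolding s_def by (metis of_int_1 of_int_add of_int_le_iff of_int_of_nat_eq of_int_power)
  then have "real_of_int k / s \<in> {0..1}" "(real_of_int k + 1) / s \<in> {0..1}"
    using k s by (auto simp: field_simps)
  moreover have "(real_of_int k + 1) / s - (real_of_int k + y) / s = (1 - y) / s"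
    "(real_of_int k + y) / s - real_of_int k / s = y / s"
    using s by (simp_all add: field_simps)
  ultimately have "(f ((real_of_int k + 1) / s) - f ((real_of_int k + y) / s)) / ((1 - y) / s)
        \<le> (f ((real_of_int k + y) / s) - f (real_of_int k / s)) / (y / s)"
    using concave_on_chord_slopes[OF conc, of "real_of_int k / s" "(real_of_int k + 1) / s"
      "(real_of_int k + y) / s"] s y by (simp add: divide_strict_right_mono)
  then show ?thesis
    by (simp add: delta_plus_def delta_minus_def s_def)
qed

lemma Pc_ge_parabola:
  assumes f: "f \<in> Pc r c" and y: "y \<in> {0..1}"
  shows "c * y * (1 - y) \<le> f y"
proof -
  have f01: "f 0 = 0" "f 1 = 0"
    using f Cp_at_0_1 by (auto simp: Pc_def)
  show ?thesis
  proof (cases "y = 0 \<or> y = 1")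
    case True
    then show ?thesis using f01 by auto
  next
    case False
    with y have y: "0 < y" "y < 1" by auto
    have "delta_plus r 0 0 y f - delta_minus r 0 0 y f \<le> - c"
      using f y by (simp add: Pc_def)
    then have "- f y / (1 - y) - f y / y \<le> - c"
      using f01 by (simp add: delta_plus_def delta_minus_def)
    then have "- f y * y - f y * (1 - y) \<le> - c * (y * (1 - y))"
      using y by (simp add: field_simps)
    then show ?thesis
      by (simp add: algebra_simps)
  qed
qed

lemma min_le_twice_parabola:
  fixes x :: real
  assumes "x \<in> {0..1}"
  shows "min x (1 - x) \<le> 2 * x * (1 - x)"
proof (cases "x \<le> 1/2")
  case True
  then have "0 \<le> x * (1 - 2 * x)" using assms by simp
  then show ?thesis using True by (simp add: algebra_simps)
next
  case False
  then have "0 \<le> (1 - x) * (2 * x - 1)" using assms by simp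
  then show ?thesis using False by (simp add: algebra_simps)
qed

lemma Eset_if_delta_plus_le_delta_minus:
  assumes r: "r > 0" and f: "f \<in> Cp" and m: "m > 0"
    and lower: "\<And>x. x \<in> {0..1} \<Longrightarrow> m * dZ x \<le> f x"
    and slopes: "\<And>n k y. 0 \<le> k \<Longrightarrow> k < int r ^ n \<Longrightarrow> 0 < y \<Longrightarrow> y < 1 \<Longrightarrow>
      delta_plus r n k y f \<le> delta_minus r n k y f"
  shows "f \<in> Eset r"
proof -
  have "Delta r n k y f \<le> 0" if "0 \<le> k" "k < int r ^ n" "0 < y" "y < 1" for n k y
    using slopes[OF that] unfolding Delta_def by (simp add: mult_nonneg_nonpos)
  then show ?thesis
    unfolding Eset_def using f m r lower by (intro CollectI conjI exI[of _ m] exI[of _ 0]) auto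
qed

lemma SC0_subset_Eset:
  assumes "r > 0"
  shows "SC0 \<subseteq> Eset r"
proof
  fix f assume "f \<in> SC0"
  then have f: "f \<in> Cp" and conc: "concave_on {0..1} f" and pos: "f (1/2) > 0"
    by (auto simp: SC0_def)
  have "2 * f (1/2) * dZ x \<le> f x" if x: "x \<in> {0..1}" for x
  proof -
    have "2 * f (1/2) * dZ x \<le> 2 * f (1/2) * min x (1 - x)"
      using dZ_le_min[of x] x pos by (intro mult_left_mono) auto
    also have "\<dots> \<le> f x"
      using concave_on_ge_tent[OF conc _ _ x] Cp_at_0_1[OF f] by simp
    finally show ?thesis .
  qed
  then show "f \<in> Eset r"
    using assms f pos delta_plus_le_delta_minus_if_concave[OF conc assms]
    by (intro Eset_if_delta_plus_le_delta_minus[of _ _ "2 * f (1/2)"]) auto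
qed

lemma Pcal_subset_Eset:
  assumes "r > 0"
  shows "Pcal r \<subseteq> Eset r"
proof
  fix f assume "f \<in> Pcal r"
  then obtain c where c: "c > 0" and fc: "f \<in> Pc r c"
    by (auto simp: Pcal_def)
  have "c / 2 * dZ x \<le> f x" if x: "x \<in> {0..1}" for x
  proof -
    have "c / 2 * dZ x \<le> c / 2 * min x (1 - x)"
      using dZ_le_min[of x] x c by (intro mult_left_mono) auto
    also have "\<dots> \<le> c * x * (1 - x)"
      using mult_left_mono[OF min_le_twice_parabola[OF x], of "c / 2"] c by simp
    finally show ?thesis
      using Pc_ge_parabola[OF fc x] by linarith
  qed
  moreover have "delta_plus r n k y f \<le> delta_minus r n k y f" if "0 < y" "y < 1" for n k y
  proof -
    have "delta_plus r n k y f - delta_minus r n k y f \<le> - c"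
      using fc that by (simp add: Pc_def)
    then show ?thesis using c by linarith
  qed
  ultimately show "f \<in> Eset r"
    using assms c fc by (intro Eset_if_delta_plus_le_delta_minus[of _ _ "c / 2"]) (auto simp: Pc_def)
qed

theorem proposition3p6:
  fixes r :: nat
  assumes "r \<ge> 2"
  shows "SC0 \<subseteq> Eset r \<and> Pcal r \<subseteq> Eset r"
  using SC0_subset_Eset Pcal_subset_Eset assms by simp

end
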